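(* Let $(x^k)$ be generated by the augmented Lagrangian method described below, where each step satisfies the inexactness assumption described below, let $\bar x$ be a limit point of $(x^k)$, and assume that for every $\nu$ the function $h^\nu$ satisfies CPLD$_\nu$ in $\bar x$. Then $\bar x$ is a KKT point of the Feasibility GNEP.
   Context: GNEP: $N$ players, variables $x=(x^1,\ldots,x^N)\in\mathbb{R}^n$, $x^\nu\in\mathbb{R}^{n_\nu}$. Player $\nu$ solves $\min_{x^\nu}\theta_\nu(x)$ s.t. $g^\nu(x)\le0$, $h^\nu(x)\le0$, with continuously differentiable $\theta_\nu:\mathbb{R}^n\to\mathbb{R}$, $g^\nu:\mathbb{R}^n\to\mathbb{R}^{m_\nu}$, $h^\nu:\mathbb{R}^n\to\mathbb{R}^{p_\nu}$ ($p_\nu=0$ allowed); $m=\sum m_\nu$, $p=\sum p_\nu$. Notation: $v_+=\max\{0,v\}$ componentwise, $g^\nu_+(x)=(g^\nu(x))_+$; $\nabla f$ = transposed Jacobian, $\nabla_{x^\nu}f$ its rows for $x^\nu$; $\min$ of vectors componentwise; Euclidean norms. Vectors in $\mathbb{R}^m$ (resp. $\mathbb{R}^p$) are split into player blocks $\lambda^{\nu}\in\mathbb{R}^{m_\nu}$ (resp. $\mu^\nu\in\mathbb{R}^{p_\nu}$). Augmented Lagrangian of player $\nu$: $L_a^\nu(x,u;\rho)=\theta_\nu(x)+\frac{\rho}{2}\|(g^\nu(x)+u/\rho)_+\|^2$. Method: choose $x^0\in\mathbb{R}^n,\lambda^0\in\mathbb{R}^m,\mu^0\in\mathbb{R}^p$,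 an initial $u^0\in\mathbb{R}^m$, $u^{\max}\ge0$, and for each $\nu$: $\tau_\nu\in(0,1)$, $\gamma_\nu>1$, $\rho_{\nu,0}>0$. For $k=0,1,2,\dots$ (the method is assumed to run forever): (1) compute $(x^{k+1},\mu^{k+1})\in\mathbb{R}^{n+p}$ satisfying the inexactness assumption; (2) $\lambda^{\nu,k+1}=(u^{\nu,k}+\rho_{\nu,k}g^\nu(x^{k+1}))_+$; (3) for each $\nu$: if $\|\min\{-g^\nu(x^{k+1}),\lambda^{\nu,k+1}\}\|\le\tau_\nu\|\min\{-g^\nu(x^k),\lambda^{\nu,k}\}\|$ then $\rho_{\nu,k+1}=\rho_{\nu,k}$, else $\rho_{\nu,k+1}=\gamma_\nu\rho_{\nu,k}$; (4) $u^{k+1}=\min\{\lambda^{k+1},u^{\max}\}$ componentwise. Inexactness assumption: for all $k,\nu$, $\|\nabla_{x^\nu}L_a^\nu(x^{k+1},u^{\nu,k};\rho_{\nu,k})+\nabla_{x^\nu}h^\nu(x^{k+1})\mu^{\nu,k+1}\|\le\varepsilon_k$ and $\|\min\{-h^\nu(x^{k+1}),\mu^{\nu,k+1}\}\|\le\varepsilon_k'$, with $(\varepsilon_k)\subset[0,\infty)$ bounded and $\varepsilon'_k\to0$. Feasibility GNEP: player $\nu$ solves $\min_{x^\nu}\|g^\nu_+(x)\|^2$ s.t. $h^\nu(x)\le0$. A point $\bar x$ is a KKT point of it if for every $\nu$ there is $w^\nu\in\mathbb{R}^{p_\nu}$ with $\nabla_{x^\nu}\|g^\nu_+(\bar x)\|^2+\nabla_{x^\nu}h^\nu(\bar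 x)w^\nu=0$ and $\min\{-h^\nu(\bar x),w^\nu\}=0$. CPLD$_\nu$ for $h^\nu$ at $x$ with $h^\nu(x)\le0$: whenever $\nabla_{x^\nu}h_j^\nu(x)$, $j\in J$, are positively linearly dependent (a nontrivial nonnegative combination vanishes) for some $J\subset\{j:h_j^\nu(x)=0\}$, the vectors $\nabla_{x^\nu}h_j^\nu(y)$, $j\in J$, are linearly dependent for all $y$ in a neighbourhood of $x$. *)

theory Defs
  imports "HOL-Analysis.Analysis"
begin

text \<open>The players are the elements of a finite type 'p;
  coordinate i belongs to player blk i, so x^nu is the block {i. blk i = nu}.
  Vectors in R^{n_nu} are represented as vectors in real^'n that vanish outside
  the block (mask), which preserves Euclidean norms, sums, and linear dependence.\<close>

definition grad :: "(real ^ 'n \<Rightarrow> real) \<Rightarrow> real ^ 'n \<Rightarrow> real ^ 'n" where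
  "grad f x = (\<chi> i. frechet_derivative f (at x) (axis i 1))"

definition C1 :: "(real ^ 'n \<Rightarrow> real) \<Rightarrow> bool" where
  "C1 f \<longleftrightarrow> (\<forall>x. f differentiable (at x)) \<and> continuous_on UNIV (grad f)"

definition blockv :: "('n \<Rightarrow> 'p) \<Rightarrow> 'p \<Rightarrow> real ^ 'n \<Rightarrow> real ^ 'n" where
  "blockv blk nu v = (\<chi> i. if blk i = nu then v $ i else 0)"

definition aug_lag ::
  "(real ^ 'n \<Rightarrow> real) \<Rightarrow> (nat \<Rightarrow> real ^ 'n \<Rightarrow> real) \<Rightarrow> nat
   \<Rightarrow> real ^ 'n \<Rightarrow> (nat \<Rightarrow> real) \<Rightarrow> real \<Rightarrow> real" where
  "aug_lag th g m x u rho =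
     th x + rho / 2 * (L2_set (\<lambda>j. max 0 (g j x + u j / rho)) {..<m})\<^sup>2"

definition pos_lin_dep :: "(nat \<Rightarrow> real ^ 'n) \<Rightarrow> nat set \<Rightarrow> bool" where
  "pos_lin_dep v J \<longleftrightarrow>
     (\<exists>a. (\<forall>j\<in>J. a j \<ge> 0) \<and> (\<exists>j\<in>J. a j \<noteq> 0) \<and> (\<Sum>j\<in>J. a j *\<^sub>R v j) = 0)"

definition lin_dep_fam :: "(nat \<Rightarrow> real ^ 'n) \<Rightarrow> nat set \<Rightarrow> bool" where
  "lin_dep_fam v J \<longleftrightarrow>
     (\<exists>a. (\<exists>j\<in>J. a j \<noteq> 0) \<and> (\<Sum>j\<in>J. a j *\<^sub>R v j) = 0)"

definition CPLD ::
  "('n \<Rightarrow> 'p) \<Rightarrow> 'p \<Rightarrow> (nat \<Rightarrow> real ^ 'n \<Rightarrow> real) \<Rightarrow> nat \<Rightarrow> real ^ 'n \<Rightarrow> bool" where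
  "CPLD blk nu h p x \<longleftrightarrow>
     (\<forall>J. J \<subseteq> {j. j < p \<and> h j x = 0} \<longrightarrow>
        pos_lin_dep (\<lambda>j. blockv blk nu (grad (h j) x)) J \<longrightarrow>
        eventually (\<lambda>y. lin_dep_fam (\<lambda>j. blockv blk nu (grad (h j) y)) J) (nhds x))"

definition feas_KKT ::
  "('n \<Rightarrow> 'p) \<Rightarrow> ('p \<Rightarrow> nat \<Rightarrow> real ^ 'n \<Rightarrow> real) \<Rightarrow> ('p \<Rightarrow> nat)
   \<Rightarrow> ('p \<Rightarrow> nat \<Rightarrow> real ^ 'n \<Rightarrow> real) \<Rightarrow> ('p \<Rightarrow> nat) \<Rightarrow> real ^ 'n \<Rightarrow> bool" where
  "feas_KKT blk g m h p x \<longleftrightarrow>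
     (\<forall>nu. \<exists>w :: nat \<Rightarrow> real.
        blockv blk nu (grad (\<lambda>y. (L2_set (\<lambda>j. max 0 (g nu j y)) {..<m nu})\<^sup>2) x)
          + (\<Sum>j<p nu. w j *\<^sub>R blockv blk nu (grad (h nu j) x)) = 0
        \<and> (\<forall>j<p nu. min (- h nu j x) (w j) = 0))"

end

theory Submission
  imports Defs
begin

(*
  If the penalty parameter of player nu stays bounded, the test in step (3) eventually always
  succeeds, so the residual norm(min(-g^nu(x^k), lambda^nu,k)) contracts geometrically and the limit
  point is feasible for g^nu; the feasibility problem is then solved with zero multipliers.
  Otherwise rho_nu,k tends to infinity. Dividing the approximate stationarity condition by rho_nu,k
  along the subsequence shows that -grad_{x^nu} norm(g^nu_+(xbar))^2 / 2 is the limit of nonnegative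
  combinations of the gradients of the constraints h^nu_j active at xbar, all other multiplier
  contributions vanishing. Under CPLD such a limit lies in the cone spanned by the active gradients
  at xbar: by Caratheodory each combination may be taken over a linearly independent subfamily, and
  if the coefficients were unbounded, normalising them would produce a positive linear dependence at
  xbar, which CPLD transfers to the independent families nearby.
*)

lemma has_real_derivative_pos_part_square:
  "((\<lambda>t::real. (max 0 t)\<^sup>2) has_real_derivative 2 * max 0 t) (at t)"
proof -
  consider "t > 0" | "t < 0" | "t = 0" by linarith
  then show ?thesis
  proof cases
    case 1
    have ev: "\<forall>\<^sub>F s in nhds t. (max 0 s)\<^sup>2 = s\<^sup>2"
      using eventually_nhds_in_open[of "{0<..}" t] 1 by (auto elim!: eventually_mono)
    have "((\<lambda>s. s\<^sup>2) has_real_derivative 2 * t) (at t)"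
      by (auto intro!: derivative_eq_intros)
    then show ?thesis using 1 by (subst DERIV_cong_ev[OF refl ev]) auto
  next
    case 2
    have ev: "\<forall>\<^sub>F s in nhds t. (max 0 s)\<^sup>2 = 0"
      using eventually_nhds_in_open[of "{..<0}" t] 2 by (auto elim!: eventually_mono)
    have "((\<lambda>s. 0::real) has_real_derivative 0) (at t)" by simp
    then show ?thesis using 2 by (subst DERIV_cong_ev[OF refl ev]) auto
  next
    case 3
    have "(\<lambda>y::real. (max 0 y)\<^sup>2 / y) = max 0"
      by (auto simp: max_def power2_eq_square fun_eq_iff)
    moreover have "((\<lambda>y::real. max 0 y) \<longlongrightarrow> max 0 0) (at 0)"
      by (intro tendsto_intros)
    ultimately show ?thesis using 3 by (simp add: has_field_derivative_iff)
  qed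
qed

lemma grad_eqI:
  assumes "(f has_derivative (\<lambda>h. v \<bullet> h)) (at x)"
  shows "grad f x = v"
proof -
  have "frechet_derivative f (at x) = (\<lambda>h. v \<bullet> h)"
    using frechet_derivative_at[OF assms] by simp
  then show ?thesis by (simp add: grad_def vec_eq_iff inner_axis)
qed

lemma has_derivative_grad:
  assumes "f differentiable (at x)"
  shows "(f has_derivative (\<lambda>h. grad f x \<bullet> h)) (at x)"
proof -
  let ?D = "frechet_derivative f (at x)"
  have D: "(f has_derivative ?D) (at x)"
    using assms frechet_derivative_works by blast
  then have "linear ?D" by (rule has_derivative_linear)
  have "?D h = grad f x \<bullet> h" for h
  proof -
    have "?D h = ?D (\<Sum>i\<in>UNIV. (h $ i) *\<^sub>R axis i 1)"
      using basis_expansion[of h] by (simp add: scalar_mult_eq_scaleR)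
    also have "\<dots> = (\<Sum>i\<in>UNIV. h $ i * ?D (axis i 1))"
      using \<open>linear ?D\<close> by (simp add: linear_sum linear_scale)
    finally show ?thesis by (simp add: grad_def inner_vec_def mult.commute)
  qed
  with D show ?thesis by (metis (no_types, lifting) ext)
qed

lemma has_derivative_pos_part_square:
  assumes "G differentiable (at x)"
  shows "((\<lambda>y. (max 0 (G y + c))\<^sup>2) has_derivative
          (\<lambda>h. 2 * max 0 (G x + c) * (grad G x \<bullet> h))) (at x)"
proof -
  have "((\<lambda>y. G y + c) has_derivative (\<lambda>h. grad G x \<bullet> h)) (at x)"
    using has_derivative_grad[OF assms] by (auto intro!: derivative_eq_intros)
  moreover have "((\<lambda>t. (max 0 t)\<^sup>2) has_derivative (*) (2 * max 0 (G x + c))) (at (G x + c))"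
    using has_real_derivative_pos_part_square by (simp add: has_field_derivative_def)
  ultimately show ?thesis
    by (auto dest: diff_chain_at simp: o_def mult_ac)
qed

lemma has_derivative_L2_set_pos_part_square:
  assumes "\<And>j. j < M \<Longrightarrow> G j differentiable (at x)"
  shows "((\<lambda>y. (L2_set (\<lambda>j. max 0 (G j y + c j)) {..<M})\<^sup>2) has_derivative
          (\<lambda>h. (\<Sum>j<M. (2 * max 0 (G j x + c j)) *\<^sub>R grad (G j) x) \<bullet> h)) (at x)"
proof -
  have "((\<lambda>y. \<Sum>j<M. (max 0 (G j y + c j))\<^sup>2) has_derivative
          (\<lambda>h. \<Sum>j<M. 2 * max 0 (G j x + c j) * (grad (G j) x \<bullet> h))) (at x)"
    by (intro has_derivative_sum has_derivative_pos_part_square assms) simp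
  then show ?thesis
    by (simp add: L2_set_def sum_nonneg inner_sum_left)
qed

lemma grad_L2_set_pos_part_square:
  assumes "\<And>j. j < M \<Longrightarrow> G j differentiable (at x)"
  shows "grad (\<lambda>y. (L2_set (\<lambda>j. max 0 (G j y)) {..<M})\<^sup>2) x
     = (\<Sum>j<M. (2 * max 0 (G j x)) *\<^sub>R grad (G j) x)"
  by (rule grad_eqI)
    (use has_derivative_L2_set_pos_part_square[where G=G and c="\<lambda>_. 0"] assms in simp)

lemma grad_aug_lag:
  assumes "th differentiable (at x)" "\<And>j. j < M \<Longrightarrow> G j differentiable (at x)"
  shows "grad (\<lambda>y. aug_lag th G M y u R) x
     = grad th x + (\<Sum>j<M. (R * max 0 (G j x + u j / R)) *\<^sub>R grad (G j) x)"
proof (rule grad_eqI)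
  have "((\<lambda>y. aug_lag th G M y u R) has_derivative
     (\<lambda>h. grad th x \<bullet> h + R / 2 * ((\<Sum>j<M. (2 * max 0 (G j x + u j / R)) *\<^sub>R grad (G j) x) \<bullet> h))) (at x)"
    unfolding aug_lag_def
    by (intro has_derivative_add has_derivative_grad assms has_derivative_mult_right
        has_derivative_L2_set_pos_part_square)
  then show "((\<lambda>y. aug_lag th G M y u R) has_derivative
     (\<lambda>h. (grad th x + (\<Sum>j<M. (R * max 0 (G j x + u j / R)) *\<^sub>R grad (G j) x)) \<bullet> h)) (at x)"
    by (simp add: inner_sum_left sum_distrib_left algebra_simps)
qed

lemma scaled_grad_aug_lag:
  assumes "th differentiable (at x)" "\<And>j. j < M \<Longrightarrow> G j differentiable (at x)" "R > 0"
  shows "(1 / R) *\<^sub>R grad (\<lambda>y. aug_lag th G M y u R) x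
     = (1 / R) *\<^sub>R grad th x + (\<Sum>j<M. max 0 (G j x + u j / R) *\<^sub>R grad (G j) x)"
  using assms by (simp add: grad_aug_lag scaleR_add_right scaleR_sum_right)

lemma blockv_add [simp]: "blockv blk nu (a + b) = blockv blk nu a + blockv blk nu b"
  by (simp add: blockv_def vec_eq_iff)

lemma blockv_scaleR [simp]: "blockv blk nu (c *\<^sub>R a) = c *\<^sub>R blockv blk nu a"
  by (simp add: blockv_def vec_eq_iff)

lemma bounded_linear_blockv: "bounded_linear (blockv blk nu)"
  by (simp add: linear_conv_bounded_linear[symmetric] linearI)

lemma blockv_sum [simp]: "blockv blk nu (\<Sum>j\<in>A. f j) = (\<Sum>j\<in>A. blockv blk nu (f j))"
  using linear_sum[OF bounded_linear.linear[OF bounded_linear_blockv]] .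

lemma C1_imp_differentiable: "C1 f \<Longrightarrow> f differentiable (at x)"
  by (simp add: C1_def)

lemma C1_imp_isCont: "C1 f \<Longrightarrow> isCont f x"
  by (simp add: C1_def differentiable_imp_continuous_within)

lemma C1_imp_isCont_blockv_grad: "C1 f \<Longrightarrow> isCont (\<lambda>z. blockv blk nu (grad f z)) x"
  unfolding C1_def continuous_on_eq_continuous_at[OF open_UNIV]
  by (auto intro: continuous_at_compose[unfolded o_def] linear_continuous_at bounded_linear_blockv)

lemma abs_le_L2_set: "finite A \<Longrightarrow> i \<in> A \<Longrightarrow> \<bar>f i\<bar> \<le> L2_set f A"
  using member_le_L2_set[of A i "\<lambda>j. \<bar>f j\<bar>"] by (simp add: L2_set_def)

lemma finite_range_imp_constant_subseq:
  fixes f :: "nat \<Rightarrow> 'a"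
  assumes "finite (range f)"
  obtains r :: "nat \<Rightarrow> nat" and a where "strict_mono r" "\<And>l. f (r l) = a"
proof -
  obtain a where "infinite (f -` {a})"
    using inf_img_fin_dom[OF assms] by auto
  from infinite_enumerate[OF this] obtain r :: "nat \<Rightarrow> nat"
    where "strict_mono r" "\<And>l. r l \<in> f -` {a}"
    by auto
  then show ?thesis by (intro that[of r a]) auto
qed

lemma bounded_family_convergent_subseq:
  fixes f :: "nat \<Rightarrow> 'i \<Rightarrow> real"
  assumes "finite A" "\<And>j. j \<in> A \<Longrightarrow> bounded (range (\<lambda>l. f l j))"
  shows "\<exists>r L. strict_mono r \<and> (\<forall>j\<in>A. (\<lambda>l. f (r l) j) \<longlonglongrightarrow> L j)"
  using assms
proof (induction A rule: finite_induct)
  case empty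
  show ?case using strict_mono_id by blast
next
  case (insert a A)
  then obtain r L where r: "strict_mono r" "\<forall>j\<in>A. (\<lambda>l. f (r l) j) \<longlonglongrightarrow> L j"
    by auto
  have "bounded (range (\<lambda>l. f (r l) a))"
    using insert.prems[of a] by (rule bounded_subset) auto
  from bounded_imp_convergent_subsequence[OF this] obtain La r' where
    r': "strict_mono r'" "((\<lambda>l. f (r l) a) \<circ> r') \<longlonglongrightarrow> La" by blast
  have "(\<lambda>l. f (r (r' l)) j) \<longlonglongrightarrow> (L(a := La)) j" if "j \<in> insert a A" for j
  proof (cases "j = a")
    case True
    then show ?thesis using r'(2) by (simp add: o_def)
  next
    case False
    then have "(\<lambda>l. f (r l) j) \<longlonglongrightarrow> L j" using r(2) that by auto
    from LIMSEQ_subseq_LIMSEQ[OF this r'(1)] show ?thesis using False by (simp add: o_def)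
  qed
  moreover have "strict_mono (r \<circ> r')" using r(1) r'(1) by (rule strict_mono_o)
  ultimately show ?case
    by (intro exI[of _ "r \<circ> r'"] exI[of _ "L(a := La)"]) (simp add: o_def)
qed

lemma normalized_weights_convergent_subseq:
  fixes d :: "nat \<Rightarrow> 'i \<Rightarrow> real"
  assumes "finite J" and d_nonneg: "\<And>l j. j \<in> J \<Longrightarrow> 0 \<le> d l j"
  defines "s l \<equiv> 1 + (\<Sum>j\<in>J. d l j)"
  obtains r L where "strict_mono r" "\<And>j. j \<in> J \<Longrightarrow> 0 \<le> L j" "(\<Sum>j\<in>J. L j) \<le> 1"
    "\<And>j. j \<in> J \<Longrightarrow> (\<lambda>l. d (r l) j / s (r l)) \<longlonglongrightarrow> L j"
    "(\<lambda>l. 1 / s (r l)) \<longlonglongrightarrow> 1 - (\<Sum>j\<in>J. L j)"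
proof -
  have s_ge: "s l \<ge> 1 + d l j" if "j \<in> J" for l j
    unfolding s_def using member_le_sum[OF that _ \<open>finite J\<close>] d_nonneg by auto
  have s_pos: "s l > 0" for l
    unfolding s_def using d_nonneg by (smt (verit) sum_nonneg)
  have "bounded (range (\<lambda>l. d l j / s l))" if "j \<in> J" for j
  proof (rule boundedI[where B=1], clarify)
    fix l
    have "0 \<le> d l j / s l" "d l j / s l \<le> 1"
      using s_ge[OF that, of l] s_pos[of l] d_nonneg[OF that, of l] by simp_all
    then show "norm (d l j / s l) \<le> 1" by simp
  qed
  then obtain r L where r: "strict_mono r" and lim: "\<And>j. j \<in> J \<Longrightarrow> (\<lambda>l. d (r l) j / s (r l)) \<longlonglongrightarrow> L j"
    using bounded_family_convergent_subseq[OF \<open>finite J\<close>, of "\<lambda>l j. d l j / s l"] by blast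
  have "1 / s l = 1 - (\<Sum>j\<in>J. d l j / s l)" for l
  proof -
    have "1 / s l = (s l - (\<Sum>j\<in>J. d l j)) / s l" by (simp add: s_def)
    also have "\<dots> = 1 - (\<Sum>j\<in>J. d l j / s l)"
      using s_pos[of l] by (simp add: diff_divide_distrib sum_divide_distrib)
    finally show ?thesis .
  qed
  moreover have "(\<lambda>l. 1 - (\<Sum>j\<in>J. d (r l) j / s (r l))) \<longlonglongrightarrow> 1 - (\<Sum>j\<in>J. L j)"
    by (intro tendsto_intros lim)
  ultimately have lim1: "(\<lambda>l. 1 / s (r l)) \<longlonglongrightarrow> 1 - (\<Sum>j\<in>J. L j)"
    by simp
  have "0 \<le> 1 - (\<Sum>j\<in>J. L j)"
    using s_pos by (intro LIMSEQ_le_const[OF lim1]) (auto intro: less_imp_le)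
  then have "(\<Sum>j\<in>J. L j) \<le> 1" by simp
  moreover have "0 \<le> L j" if "j \<in> J" for j
    using s_pos d_nonneg[OF that]
    by (intro LIMSEQ_le_const[OF lim[OF that]]) (auto intro!: divide_nonneg_pos)
  ultimately show ?thesis using that[OF r _ _ lim lim1] by blast
qed

lemma limit_point_Suc_subseq:
  assumes "strict_mono r" "(x \<circ> r) \<longlonglongrightarrow> xb"
  obtains q where "strict_mono q" "(\<lambda>l. x (Suc (q l))) \<longlonglongrightarrow> xb"
proof
  have r_Suc: "Suc (r (Suc l) - 1) = r (Suc l)" for l
    using seq_suble[OF assms(1), of "Suc l"] by simp
  show "strict_mono (\<lambda>l. r (Suc l) - 1)"
    using assms(1) r_Suc by (simp add: strict_mono_Suc_iff) (metis Suc_less_SucD)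
  show "(\<lambda>l. x (Suc (r (Suc l) - 1))) \<longlonglongrightarrow> xb"
    unfolding r_Suc using LIMSEQ_Suc[OF assms(2)] by (simp add: o_def)
qed

lemma bounded_divide_tendsto_zero:
  fixes f R :: "nat \<Rightarrow> real"
  assumes "bounded (range f)" "\<And>l. 0 < R l" "filterlim R at_top sequentially"
  shows "(\<lambda>l. f l / R l) \<longlonglongrightarrow> 0"
proof -
  obtain C where C: "\<And>l. \<bar>f l\<bar> \<le> C"
    using assms(1) unfolding bounded_iff by (metis rangeI real_norm_def)
  have "\<forall>l. norm (f l / R l) \<le> C * inverse (R l)"
    using C assms(2) by (simp add: divide_right_mono less_imp_le flip: divide_inverse)
  moreover have "(\<lambda>l. C * inverse (R l)) \<longlonglongrightarrow> 0"
    by (intro tendsto_mult_right_zero tendsto_inverse_0_at_top assms(3))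
  ultimately show ?thesis
    by (rule Lim_null_comparison[OF always_eventually])
qed

lemma conic_comb_drop_one:
  fixes v :: "nat \<Rightarrow> real ^ 'n"
  assumes "finite J" "\<forall>j\<in>J. 0 \<le> c j" "lin_dep_fam v J"
  obtains j0 c' where "j0 \<in> J" "\<forall>j\<in>J - {j0}. 0 \<le> c' j"
    "(\<Sum>j\<in>J. c j *\<^sub>R v j) = (\<Sum>j\<in>J - {j0}. c' j *\<^sub>R v j)"
proof -
  obtain \<beta> j1 where j1: "j1 \<in> J" "\<beta> j1 \<noteq> 0" and \<beta>: "(\<Sum>j\<in>J. \<beta> j *\<^sub>R v j) = 0"
    using assms(3) unfolding lin_dep_fam_def by blast
  define b where "b = (if \<beta> j1 > 0 then \<beta> else (\<lambda>j. - \<beta> j))"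
  have "b j1 > 0" using j1 by (auto simp: b_def)
  have b_comb: "(\<Sum>j\<in>J. b j *\<^sub>R v j) = 0"
    using \<beta> by (auto simp: b_def sum_negf)
  \<comment> \<open>Subtract the largest multiple of the relation that keeps all coefficients nonnegative.\<close>
  define P where "P = {j\<in>J. b j > 0}"
  have "finite P" "j1 \<in> P" using assms(1) \<open>b j1 > 0\<close> j1 by (auto simp: P_def)
  define t where "t = Min ((\<lambda>j. c j / b j) ` P)"
  obtain j0 where j0: "j0 \<in> P" "t = c j0 / b j0"
    using Min_in[of "(\<lambda>j. c j / b j) ` P"] \<open>finite P\<close> \<open>j1 \<in> P\<close> unfolding t_def by fastforce
  have t_le: "t \<le> c j / b j" if "j \<in> P" for j
    unfolding t_def using \<open>finite P\<close> that by auto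
  have "t \<ge> 0" using j0 assms(2) by (auto simp: P_def)
  define c' where "c' j = c j - t * b j" for j
  have c'_nonneg: "0 \<le> c' j" if "j \<in> J" for j
  proof (cases "b j > 0")
    case True
    then show ?thesis using t_le[of j] that by (auto simp: c'_def P_def pos_le_divide_eq)
  next
    case False
    then have "t * b j \<le> 0" using \<open>t \<ge> 0\<close> by (simp add: mult_nonneg_nonpos)
    moreover have "0 \<le> c j" using assms(2) that by blast
    ultimately show ?thesis by (simp add: c'_def)
  qed
  have "j0 \<in> J" "c' j0 = 0" using j0 by (auto simp: c'_def P_def)
  have "(\<Sum>j\<in>J. c' j *\<^sub>R v j) = (\<Sum>j\<in>J. c j *\<^sub>R v j) - t *\<^sub>R (\<Sum>j\<in>J. b j *\<^sub>R v j)"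
    by (simp add: c'_def scaleR_diff_left sum_subtractf scaleR_sum_right)
  then have "(\<Sum>j\<in>J. c j *\<^sub>R v j) = (\<Sum>j\<in>J. c' j *\<^sub>R v j)"
    by (simp add: b_comb)
  also have "\<dots> = (\<Sum>j\<in>J - {j0}. c' j *\<^sub>R v j)"
    using sum.remove[OF assms(1) \<open>j0 \<in> J\<close>, of "\<lambda>j. c' j *\<^sub>R v j"] \<open>c' j0 = 0\<close> by simp
  finally show ?thesis
    using \<open>j0 \<in> J\<close> c'_nonneg by (intro that[of j0 c']) auto
qed

lemma conic_comb_lin_indep_support:
  fixes v :: "nat \<Rightarrow> real ^ 'n"
  assumes "finite J" "\<forall>j\<in>J. 0 \<le> c j"
  shows "\<exists>J' c'. J' \<subseteq> J \<and> (\<forall>j\<in>J'. 0 \<le> c' j) \<and>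
           (\<Sum>j\<in>J. c j *\<^sub>R v j) = (\<Sum>j\<in>J'. c' j *\<^sub>R v j) \<and> \<not> lin_dep_fam v J'"
  using assms
proof (induction J arbitrary: c rule: finite_psubset_induct)
  case (psubset J)
  show ?case
  proof (cases "lin_dep_fam v J")
    case False
    then show ?thesis using psubset.prems by blast
  next
    case True
    then obtain j0 c' where "j0 \<in> J" and "\<forall>j\<in>J - {j0}. 0 \<le> c' j"
      and comb_eq: "(\<Sum>j\<in>J. c j *\<^sub>R v j) = (\<Sum>j\<in>J - {j0}. c' j *\<^sub>R v j)"
      using conic_comb_drop_one[OF psubset.hyps(1) psubset.prems] by blast
    have "J - {j0} \<subset> J" using \<open>j0 \<in> J\<close> by blast
    from psubset.IH[OF this \<open>\<forall>j\<in>J - {j0}. 0 \<le> c' j\<close>] obtain J' c'' where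
      "J' \<subseteq> J - {j0}" "\<forall>j\<in>J'. 0 \<le> c'' j"
      "(\<Sum>j\<in>J - {j0}. c' j *\<^sub>R v j) = (\<Sum>j\<in>J'. c'' j *\<^sub>R v j)" "\<not> lin_dep_fam v J'"
      by blast
    with comb_eq show ?thesis by (intro exI[of _ J'] exI[of _ c'']) auto
  qed
qed

lemma conic_comb_subseq_lin_indep_support:
  fixes v :: "nat \<Rightarrow> nat \<Rightarrow> real ^ 'n"
  assumes "finite A" "\<And>l j. j \<in> A \<Longrightarrow> 0 \<le> c l j"
  obtains r :: "nat \<Rightarrow> nat" and J d where "strict_mono r" "J \<subseteq> A"
    "\<And>l j. j \<in> J \<Longrightarrow> 0 \<le> d l j"
    "\<And>l. (\<Sum>j\<in>A. c (r l) j *\<^sub>R v (r l) j) = (\<Sum>j\<in>J. d l j *\<^sub>R v (r l) j)"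
    "\<And>l. \<not> lin_dep_fam (v (r l)) J"
proof -
  have "\<forall>l. \<exists>J' c'. J' \<subseteq> A \<and> (\<forall>j\<in>J'. 0 \<le> c' j) \<and>
          (\<Sum>j\<in>A. c l j *\<^sub>R v l j) = (\<Sum>j\<in>J'. c' j *\<^sub>R v l j) \<and> \<not> lin_dep_fam (v l) J'"
    using conic_comb_lin_indep_support[OF \<open>finite A\<close>] assms(2) by blast
  from choice[OF this] obtain JJ where "\<forall>l. \<exists>c'. JJ l \<subseteq> A \<and> (\<forall>j\<in>JJ l. 0 \<le> c' j) \<and>
          (\<Sum>j\<in>A. c l j *\<^sub>R v l j) = (\<Sum>j\<in>JJ l. c' j *\<^sub>R v l j) \<and> \<not> lin_dep_fam (v l) (JJ l)"
    by blast
  from choice[OF this] obtain cc where "\<forall>l. JJ l \<subseteq> A \<and> (\<forall>j\<in>JJ l. 0 \<le> cc l j) \<and>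
          (\<Sum>j\<in>A. c l j *\<^sub>R v l j) = (\<Sum>j\<in>JJ l. cc l j *\<^sub>R v l j) \<and> \<not> lin_dep_fam (v l) (JJ l)"
    by blast
  then have JJ: "\<And>l. JJ l \<subseteq> A" "\<And>l j. j \<in> JJ l \<Longrightarrow> 0 \<le> cc l j"
    "\<And>l. (\<Sum>j\<in>A. c l j *\<^sub>R v l j) = (\<Sum>j\<in>JJ l. cc l j *\<^sub>R v l j)"
    "\<And>l. \<not> lin_dep_fam (v l) (JJ l)"
    by blast+
  have "range JJ \<subseteq> Pow A" using JJ(1) by blast
  then have "finite (range JJ)" using \<open>finite A\<close> by (simp add: finite_subset)
  then obtain r :: "nat \<Rightarrow> nat" and J where r: "strict_mono r" and JJ_r: "\<And>l. JJ (r l) = J"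
    by (rule finite_range_imp_constant_subseq) blast
  have "J \<subseteq> A" using JJ(1)[of "r 0"] by (simp add: JJ_r)
  moreover have "0 \<le> cc (r l) j" if "j \<in> J" for l j
    using JJ(2) JJ_r that by metis
  ultimately show ?thesis
    using r JJ(3,4)[of "r _"] by (intro that[of r J "\<lambda>l. cc (r l)"]) (simp_all add: JJ_r)
qed

lemma normalized_conic_comb_limit:
  fixes G :: "nat \<Rightarrow> 'a::t2_space \<Rightarrow> 'b::real_normed_vector"
  assumes "finite J" and d_nonneg: "\<And>l j. j \<in> J \<Longrightarrow> 0 \<le> d l j"
    and G_cont: "\<And>j. j \<in> J \<Longrightarrow> isCont (G j) xb" and y_lim: "y \<longlonglongrightarrow> xb"
    and comb_lim: "(\<lambda>l. \<Sum>j\<in>J. d l j *\<^sub>R G j (y l)) \<longlonglongrightarrow> v"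
  obtains r :: "nat \<Rightarrow> nat" and L where "strict_mono r" "\<And>j. j \<in> J \<Longrightarrow> 0 \<le> L j" "(\<Sum>j\<in>J. L j) \<le> 1"
    "(1 - (\<Sum>j\<in>J. L j)) *\<^sub>R v = (\<Sum>j\<in>J. L j *\<^sub>R G j xb)"
proof -
  define s where "s l = 1 + (\<Sum>j\<in>J. d l j)" for l
  obtain r L where r: "strict_mono r" and L: "\<And>j. j \<in> J \<Longrightarrow> 0 \<le> L j" "(\<Sum>j\<in>J. L j) \<le> 1"
    and d_lim: "\<And>j. j \<in> J \<Longrightarrow> (\<lambda>l. d (r l) j / s (r l)) \<longlonglongrightarrow> L j"
    and s_lim: "(\<lambda>l. 1 / s (r l)) \<longlonglongrightarrow> 1 - (\<Sum>j\<in>J. L j)"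
    using normalized_weights_convergent_subseq[of J d] \<open>finite J\<close> d_nonneg unfolding s_def by blast
  \<comment> \<open>Rescaling by 1 / s computes the limit of the normalized combinations in two ways.\<close>
  have "(\<lambda>l. (1 / s (r l)) *\<^sub>R (\<Sum>j\<in>J. d (r l) j *\<^sub>R G j (y (r l))))
          \<longlonglongrightarrow> (1 - (\<Sum>j\<in>J. L j)) *\<^sub>R v"
    using LIMSEQ_subseq_LIMSEQ[OF comb_lim r] by (intro tendsto_scaleR s_lim) (simp add: o_def)
  moreover have "(\<lambda>l. (1 / s (r l)) *\<^sub>R (\<Sum>j\<in>J. d (r l) j *\<^sub>R G j (y (r l))))
          \<longlonglongrightarrow> (\<Sum>j\<in>J. L j *\<^sub>R G j xb)"
  proof -
    have "(\<lambda>l. y (r l)) \<longlonglongrightarrow> xb"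
      using LIMSEQ_subseq_LIMSEQ[OF y_lim r] by (simp add: o_def)
    then show ?thesis
      unfolding scaleR_sum_right scaleR_scaleR
      by (intro tendsto_sum tendsto_scaleR isCont_tendsto_compose[OF G_cont]) (auto simp: d_lim)
  qed
  ultimately have "(1 - (\<Sum>j\<in>J. L j)) *\<^sub>R v = (\<Sum>j\<in>J. L j *\<^sub>R G j xb)"
    by (rule LIMSEQ_unique)
  with r L show ?thesis by (rule that[of r L])
qed

lemma CPLD_conic_comb_limit:
  fixes G :: "nat \<Rightarrow> 'a::t2_space \<Rightarrow> real ^ 'n" and y :: "nat \<Rightarrow> 'a"
  assumes "finite A"
    and G_cont: "\<And>j. j \<in> A \<Longrightarrow> isCont (G j) xb"
    and y_lim: "y \<longlonglongrightarrow> xb"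
    and c_nonneg: "\<And>l j. j \<in> A \<Longrightarrow> 0 \<le> c l j"
    and comb_lim: "(\<lambda>l. \<Sum>j\<in>A. c l j *\<^sub>R G j (y l)) \<longlonglongrightarrow> v"
    and cpld: "\<And>J. J \<subseteq> A \<Longrightarrow> pos_lin_dep (\<lambda>j. G j xb) J \<Longrightarrow>
                 eventually (\<lambda>z. lin_dep_fam (\<lambda>j. G j z) J) (nhds xb)"
  shows "\<exists>w. (\<forall>j\<in>A. 0 \<le> w j) \<and> v = (\<Sum>j\<in>A. w j *\<^sub>R G j xb)"
proof -
  obtain r1 :: "nat \<Rightarrow> nat" and J d where r1: "strict_mono r1" and "J \<subseteq> A"
    and d_nonneg: "\<And>l j. j \<in> J \<Longrightarrow> 0 \<le> d l j"
    and comb_eq: "\<And>l. (\<Sum>j\<in>A. c (r1 l) j *\<^sub>R G j (y (r1 l))) = (\<Sum>j\<in>J. d l j *\<^sub>R G j (y (r1 l)))"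
    and indep: "\<And>l. \<not> lin_dep_fam (\<lambda>j. G j (y (r1 l))) J"
    using conic_comb_subseq_lin_indep_support[OF \<open>finite A\<close>, of c "\<lambda>l j. G j (y l)"] c_nonneg
    by blast
  have "finite J" using \<open>J \<subseteq> A\<close> \<open>finite A\<close> by (rule finite_subset)
  have y_r1: "(\<lambda>l. y (r1 l)) \<longlonglongrightarrow> xb"
    using LIMSEQ_subseq_LIMSEQ[OF y_lim r1] by (simp add: o_def)
  have comb_r1: "(\<lambda>l. \<Sum>j\<in>J. d l j *\<^sub>R G j (y (r1 l))) \<longlonglongrightarrow> v"
    using LIMSEQ_subseq_LIMSEQ[OF comb_lim r1] by (simp add: o_def comb_eq)
  have G_cont_J: "isCont (G j) xb" if "j \<in> J" for j
    using G_cont \<open>J \<subseteq> A\<close> that by blast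
  obtain r2 L where L_nonneg: "\<And>j. j \<in> J \<Longrightarrow> 0 \<le> L j" and "(\<Sum>j\<in>J. L j) \<le> 1"
    and limits_eq: "(1 - (\<Sum>j\<in>J. L j)) *\<^sub>R v = (\<Sum>j\<in>J. L j *\<^sub>R G j xb)"
    using normalized_conic_comb_limit[where d=d and G=G and xb=xb and y="\<lambda>l. y (r1 l)" and v=v,
        OF \<open>finite J\<close> d_nonneg G_cont_J y_r1 comb_r1]
    by blast
  show ?thesis
  proof (cases "(\<Sum>j\<in>J. L j) < 1")
    case True
    define w where "w j = (if j \<in> J then L j / (1 - (\<Sum>j\<in>J. L j)) else 0)" for j
    have "(\<Sum>j\<in>A. w j *\<^sub>R G j xb) = (\<Sum>j\<in>J. w j *\<^sub>R G j xb)"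
      using \<open>J \<subseteq> A\<close> \<open>finite A\<close> by (intro sum.mono_neutral_right) (auto simp: w_def)
    also have "\<dots> = (1 / (1 - (\<Sum>j\<in>J. L j))) *\<^sub>R (\<Sum>j\<in>J. L j *\<^sub>R G j xb)"
      by (simp add: w_def scaleR_sum_right)
    also have "\<dots> = v"
      using True by (simp flip: limits_eq)
    finally show ?thesis using True L_nonneg by (intro exI[of _ w]) (auto simp: w_def)
  next
    case False
    \<comment> \<open>The limit weights are a positive linear dependence at xb, which CPLD carries over to the independent supports.\<close>
    then have "(\<Sum>j\<in>J. L j) = 1" using \<open>(\<Sum>j\<in>J. L j) \<le> 1\<close> by simp
    then obtain j1 where "j1 \<in> J" "L j1 \<noteq> 0" by (metis sum.neutral zero_neq_one)
    moreover have "(\<Sum>j\<in>J. L j *\<^sub>R G j xb) = 0" using limits_eq \<open>(\<Sum>j\<in>J. L j) = 1\<close> by simp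
    ultimately have "pos_lin_dep (\<lambda>j. G j xb) J"
      using L_nonneg unfolding pos_lin_dep_def by blast
    from cpld[OF \<open>J \<subseteq> A\<close> this] have "eventually (\<lambda>l. lin_dep_fam (\<lambda>j. G j (y (r1 l))) J) sequentially"
      using eventually_compose_filterlim y_r1 by blast
    then obtain l where "lin_dep_fam (\<lambda>j. G j (y (r1 l))) J"
      by (auto simp: eventually_sequentially)
    with indep show ?thesis by blast
  qed
qed

lemma le_zero_at_limit:
  fixes f :: "'a::t2_space \<Rightarrow> real"
  assumes "y \<longlonglongrightarrow> xb" "isCont f xb" "\<And>l. f (y l) \<le> e l" "e \<longlonglongrightarrow> 0"
  shows "f xb \<le> 0"
  using LIMSEQ_le[OF isCont_tendsto_compose[OF assms(2,1)] assms(4)] assms(3) by blast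

lemma approx_complementarity_limit:
  fixes f :: "'a::t2_space \<Rightarrow> real" and \<mu> :: "nat \<Rightarrow> real"
  assumes y_lim: "y \<longlonglongrightarrow> xb" and cont: "isCont f xb"
    and compl: "\<And>l. \<bar>min (- f (y l)) (\<mu> l)\<bar> \<le> e l" and e_lim: "e \<longlonglongrightarrow> 0"
  shows "f xb \<le> 0" and "(\<lambda>l. \<mu> l - (if f xb = 0 then max 0 (\<mu> l) else 0)) \<longlonglongrightarrow> 0"
proof -
  show "f xb \<le> 0"
    using compl by (intro le_zero_at_limit[OF y_lim cont _ e_lim]) (smt (verit))
  show "(\<lambda>l. \<mu> l - (if f xb = 0 then max 0 (\<mu> l) else 0)) \<longlonglongrightarrow> 0"
  proof (cases "f xb = 0")
    case True
    have "(\<lambda>l. min 0 (\<mu> l)) \<longlonglongrightarrow> 0"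
      using compl by (intro Lim_null_comparison[OF always_eventually e_lim]) (smt (verit) real_norm_def)
    moreover have "\<mu> l - max 0 (\<mu> l) = min 0 (\<mu> l)" for l
      by (simp add: max_def min_def)
    ultimately show ?thesis using True by simp
  next
    case False
    with \<open>f xb \<le> 0\<close> have "f xb < 0" by simp
    \<comment> \<open>Eventually the constraint is strictly inactive, so the minimum is the multiplier itself.\<close>
    have "\<forall>\<^sub>F l in sequentially. e l < - f xb / 2"
      using \<open>f xb < 0\<close> by (intro order_tendstoD(2)[OF e_lim]) simp
    moreover have "\<forall>\<^sub>F l in sequentially. - f xb / 2 < - f (y l)"
      using \<open>f xb < 0\<close>
      by (intro order_tendstoD(1)[OF tendsto_minus[OF isCont_tendsto_compose[OF cont y_lim]]]) simp
    ultimately have "\<forall>\<^sub>F l in sequentially. norm (\<mu> l) \<le> e l"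
      by eventually_elim (use compl in \<open>smt (verit) real_norm_def\<close>)
    then have "\<mu> \<longlonglongrightarrow> 0" using e_lim by (rule Lim_null_comparison)
    then show ?thesis using False by simp
  qed
qed

lemma nonpos_at_limit_if_compl_residual_null:
  fixes f :: "nat \<Rightarrow> 'a::t2_space \<Rightarrow> real"
  assumes "y \<longlonglongrightarrow> xb" "isCont (f j) xb" "j < m"
    and "\<And>l. L2_set (\<lambda>j. min (- f j (y l)) (lam l j)) {..<m} \<le> e l" "e \<longlonglongrightarrow> 0"
  shows "f j xb \<le> 0"
proof (rule approx_complementarity_limit(1)[OF assms(1,2) _ assms(5)])
  show "\<bar>min (- f j (y l)) (lam l j)\<bar> \<le> e l" for l
    using abs_le_L2_set[of "{..<m}" j "\<lambda>j. min (- f j (y l)) (lam l j)"] assms(3) assms(4)[of l] by simp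
qed

lemma tendsto_zero_if_eventually_contracting:
  fixes E :: "nat \<Rightarrow> real"
  assumes "\<And>k. 0 \<le> E k" "0 \<le> \<tau>" "\<tau> < 1"
    and "eventually (\<lambda>k. E (Suc k) \<le> \<tau> * E k) sequentially"
  shows "E \<longlonglongrightarrow> 0"
proof -
  obtain k0 where k0: "\<And>k. k \<ge> k0 \<Longrightarrow> E (Suc k) \<le> \<tau> * E k"
    using assms(4) by (auto simp: eventually_sequentially)
  have "\<forall>n. norm (E (n + k0)) \<le> \<tau> ^ n * E k0"
    unfolding real_norm_def abs_of_nonneg[OF assms(1)]
  proof
    fix n show "E (n + k0) \<le> \<tau> ^ n * E k0"
    proof (induction n)
      case (Suc n)
      have "E (Suc n + k0) \<le> \<tau> * E (n + k0)" using k0[of "n + k0"] by simp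
      also have "\<dots> \<le> \<tau> * (\<tau> ^ n * E k0)" using Suc.IH assms(2) by (rule mult_left_mono)
      finally show ?case by simp
    qed simp
  qed
  moreover have "(\<lambda>n. \<tau> ^ n * E k0) \<longlonglongrightarrow> 0"
    using assms(2,3) by (intro tendsto_mult_left_zero LIMSEQ_power_zero) auto
  ultimately have "(\<lambda>n. E (n + k0)) \<longlonglongrightarrow> 0"
    by (rule Lim_null_comparison[OF always_eventually])
  then show ?thesis by (rule LIMSEQ_offset)
qed

lemma penalty_update_pos:
  fixes R :: "nat \<Rightarrow> real"
  assumes "0 < R 0" "1 < \<gamma>" "\<And>k. R (Suc k) = (if P k then R k else \<gamma> * R k)"
  shows "0 < R k"
  by (induction k) (use assms in auto)

lemma penalty_update_tendsto_at_top:
  fixes R :: "nat \<Rightarrow> real"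
  assumes R0: "0 < R 0" and \<gamma>: "1 < \<gamma>" and R_Suc: "\<And>k. R (Suc k) = (if P k then R k else \<gamma> * R k)"
    and not_ev: "\<not> eventually P sequentially"
  shows "filterlim R at_top sequentially"
proof -
  have R_pos: "0 < R k" for k using penalty_update_pos[OF R0 \<gamma> R_Suc] .
  have "incseq R"
    using R_pos \<gamma> by (intro incseq_SucI) (simp add: R_Suc)
  \<comment> \<open>Each of the infinitely many failed tests multiplies the penalty by the factor \<gamma>.\<close>
  have "\<exists>k. R 0 * \<gamma> ^ n \<le> R k" for n
  proof (induction n)
    case (Suc n)
    then obtain k where "R 0 * \<gamma> ^ n \<le> R k" by blast
    moreover obtain k' where "k \<le> k'" "\<not> P k'"
      using not_ev by (auto simp: eventually_sequentially not_le)
    moreover have "R k \<le> R k'" using \<open>incseq R\<close> \<open>k \<le> k'\<close> by (rule incseqD)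
    ultimately have "R 0 * \<gamma> ^ Suc n \<le> R (Suc k')"
      using \<gamma> by (simp add: R_Suc mult.left_commute)
    then show ?case by blast
  qed auto
  then show ?thesis
  proof (unfold filterlim_at_top, intro allI)
    fix Z :: real
    obtain n where "Z / R 0 < \<gamma> ^ n" using real_arch_pow[OF \<gamma>] by blast
    then have "Z \<le> R 0 * \<gamma> ^ n" using R0 by (simp add: divide_less_eq mult.commute)
    moreover obtain k where "R 0 * \<gamma> ^ n \<le> R k" using \<open>\<exists>k. R 0 * \<gamma> ^ n \<le> R k\<close> by blast
    ultimately have "\<forall>k'\<ge>k. Z \<le> R k'"
      using \<open>incseq R\<close> by (auto dest: incseqD)
    then show "\<forall>\<^sub>F k in sequentially. Z \<le> R k" by (auto simp: eventually_sequentially)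
  qed
qed

lemma bounded_range_safeguarded:
  fixes u lam :: "nat \<Rightarrow> real"
  assumes "\<And>k. u (Suc k) = min (lam (Suc k)) b" "\<And>k. 0 \<le> lam (Suc k)" "0 \<le> b"
  shows "bounded (range u)"
proof (rule boundedI[where B="max b \<bar>u 0\<bar>"], clarify)
  show "norm (u k) \<le> max b \<bar>u 0\<bar>" for k
    using assms by (cases k) (auto simp: min_def)
qed

definition feas_KKT_at ::
  "('n \<Rightarrow> 'p) \<Rightarrow> 'p \<Rightarrow> (nat \<Rightarrow> real ^ 'n \<Rightarrow> real) \<Rightarrow> nat
   \<Rightarrow> (nat \<Rightarrow> real ^ 'n \<Rightarrow> real) \<Rightarrow> nat \<Rightarrow> real ^ 'n \<Rightarrow> bool" where
  "feas_KKT_at blk nu g m h p x \<longleftrightarrow>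
     (\<exists>w :: nat \<Rightarrow> real.
        blockv blk nu (grad (\<lambda>y. (L2_set (\<lambda>j. max 0 (g j y)) {..<m})\<^sup>2) x)
          + (\<Sum>j<p. w j *\<^sub>R blockv blk nu (grad (h j) x)) = 0
        \<and> (\<forall>j<p. min (- h j x) (w j) = 0))"

lemma feas_KKT_iff_feas_KKT_at:
  "feas_KKT blk g m h p x \<longleftrightarrow> (\<forall>nu. feas_KKT_at blk nu (g nu) (m nu) (h nu) (p nu) x)"
  by (simp add: feas_KKT_def feas_KKT_at_def)

lemma feas_KKT_at_if_in_active_cone:
  assumes g_diff: "\<And>j. j < m \<Longrightarrow> g j differentiable (at x)"
    and h_le: "\<And>j. j < p \<Longrightarrow> h j x \<le> 0"
    and A_active: "A \<subseteq> {j. j < p \<and> h j x = 0}" and w_nonneg: "\<forall>j\<in>A. 0 \<le> w j"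
    and cone: "(\<Sum>j<m. max 0 (g j x) *\<^sub>R blockv blk nu (grad (g j) x))
                + (\<Sum>j\<in>A. w j *\<^sub>R blockv blk nu (grad (h j) x)) = 0"
  shows "feas_KKT_at blk nu g m h p x"
proof -
  \<comment> \<open>The factor 2 comes from differentiating the squared norm.\<close>
  define W where "W j = (if j \<in> A then 2 * w j else 0)" for j
  have "blockv blk nu (grad (\<lambda>y. (L2_set (\<lambda>j. max 0 (g j y)) {..<m})\<^sup>2) x)
      = 2 *\<^sub>R (\<Sum>j<m. max 0 (g j x) *\<^sub>R blockv blk nu (grad (g j) x))"
    using g_diff by (simp add: grad_L2_set_pos_part_square scaleR_sum_right)
  moreover have "(\<Sum>j<p. W j *\<^sub>R blockv blk nu (grad (h j) x))
      = 2 *\<^sub>R (\<Sum>j\<in>A. w j *\<^sub>R blockv blk nu (grad (h j) x))"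
    unfolding scaleR_sum_right using A_active
    by (intro sum.mono_neutral_cong_right) (auto simp: W_def)
  moreover have "min (- h j x) (W j) = 0" if "j < p" for j
    using h_le[OF that] w_nonneg A_active by (auto simp: W_def min_def)
  ultimately show ?thesis
    using cone unfolding feas_KKT_at_def by (intro exI[of _ W]) (simp add: scaleR_add_right[symmetric])
qed

lemma feas_KKT_at_if_feasible:
  assumes "\<And>j. j < m \<Longrightarrow> g j differentiable (at x)"
    and "\<And>j. j < m \<Longrightarrow> g j x \<le> 0" and "\<And>j. j < p \<Longrightarrow> h j x \<le> 0"
  shows "feas_KKT_at blk nu g m h p x"
  using assms by (intro feas_KKT_at_if_in_active_cone[where A="{}"]) (auto intro!: sum.neutral)

lemma scaled_aug_lag_stationarity_limit:
  fixes y :: "nat \<Rightarrow> real ^ 'n" and R :: "nat \<Rightarrow> real" and U \<kappa> :: "nat \<Rightarrow> nat \<Rightarrow> real"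
  assumes C1_th: "C1 th" and C1_g: "\<And>j. j < m \<Longrightarrow> C1 (g j)" and C1_h: "\<And>j. j < p \<Longrightarrow> C1 (h j)"
    and y_lim: "y \<longlonglongrightarrow> xb"
    and R_pos: "\<And>l. 0 < R l" and R_lim: "filterlim R at_top sequentially"
    and U_bdd: "\<And>j. j < m \<Longrightarrow> bounded (range (\<lambda>l. U l j))"
    and \<kappa>_lim: "\<And>j. j < p \<Longrightarrow> (\<lambda>l. \<kappa> l j) \<longlonglongrightarrow> 0"
  shows "(\<lambda>l. (1 / R l) *\<^sub>R blockv blk nu (grad (\<lambda>z. aug_lag th g m z (U l) (R l)) (y l))
            + (\<Sum>j<p. (\<kappa> l j / R l) *\<^sub>R blockv blk nu (grad (h j) (y l))))
         \<longlonglongrightarrow> (\<Sum>j<m. max 0 (g j xb) *\<^sub>R blockv blk nu (grad (g j) xb))"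
proof -
  have inv_R_lim: "(\<lambda>l. 1 / R l) \<longlonglongrightarrow> 0"
    using bounded_divide_tendsto_zero[of "\<lambda>_. 1", OF _ R_pos R_lim] by simp
  have "(1 / R l) *\<^sub>R blockv blk nu (grad (\<lambda>z. aug_lag th g m z (U l) (R l)) (y l))
      = (1 / R l) *\<^sub>R blockv blk nu (grad th (y l))
        + (\<Sum>j<m. max 0 (g j (y l) + U l j / R l) *\<^sub>R blockv blk nu (grad (g j) (y l)))" for l
    using scaled_grad_aug_lag[of th "y l" m g "R l" "U l"] C1_th C1_g R_pos
    by (simp add: C1_imp_differentiable flip: blockv_scaleR blockv_sum)
  moreover have "(\<lambda>l. (1 / R l) *\<^sub>R blockv blk nu (grad th (y l))
        + (\<Sum>j<m. max 0 (g j (y l) + U l j / R l) *\<^sub>R blockv blk nu (grad (g j) (y l)))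
        + (\<Sum>j<p. (\<kappa> l j / R l) *\<^sub>R blockv blk nu (grad (h j) (y l))))
      \<longlonglongrightarrow> 0 + (\<Sum>j<m. max 0 (g j xb + 0) *\<^sub>R blockv blk nu (grad (g j) xb)) + 0"
  proof (intro tendsto_add tendsto_sum tendsto_null_sum)
    show "(\<lambda>l. (1 / R l) *\<^sub>R blockv blk nu (grad th (y l))) \<longlonglongrightarrow> 0"
      using tendsto_scaleR[OF inv_R_lim isCont_tendsto_compose[OF C1_imp_isCont_blockv_grad[OF C1_th] y_lim]]
      by simp
    show "(\<lambda>l. max 0 (g j (y l) + U l j / R l) *\<^sub>R blockv blk nu (grad (g j) (y l)))
        \<longlonglongrightarrow> max 0 (g j xb + 0) *\<^sub>R blockv blk nu (grad (g j) xb)" if "j \<in> {..<m}" for j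
      using that
      by (intro tendsto_scaleR tendsto_max tendsto_const tendsto_add
          bounded_divide_tendsto_zero[OF U_bdd R_pos R_lim]
          isCont_tendsto_compose[OF C1_imp_isCont[OF C1_g] y_lim]
          isCont_tendsto_compose[OF C1_imp_isCont_blockv_grad[OF C1_g] y_lim]) auto
    show "(\<lambda>l. (\<kappa> l j / R l) *\<^sub>R blockv blk nu (grad (h j) (y l))) \<longlonglongrightarrow> 0" if "j \<in> {..<p}" for j
      using tendsto_scaleR[OF tendsto_mult[OF \<kappa>_lim inv_R_lim]
          isCont_tendsto_compose[OF C1_imp_isCont_blockv_grad[OF C1_h] y_lim]] that
      by simp
  qed
  ultimately show ?thesis by simp
qed

lemma scaled_active_multipliers_limit:
  fixes y :: "nat \<Rightarrow> real ^ 'n" and R :: "nat \<Rightarrow> real" and U M :: "nat \<Rightarrow> nat \<Rightarrow> real"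
  assumes C1_th: "C1 th" and C1_g: "\<And>j. j < m \<Longrightarrow> C1 (g j)" and C1_h: "\<And>j. j < p \<Longrightarrow> C1 (h j)"
    and y_lim: "y \<longlonglongrightarrow> xb"
    and R_pos: "\<And>l. 0 < R l" and R_lim: "filterlim R at_top sequentially"
    and U_bdd: "\<And>j. j < m \<Longrightarrow> bounded (range (\<lambda>l. U l j))"
    and stationary: "\<And>l. norm (blockv blk nu (grad (\<lambda>z. aug_lag th g m z (U l) (R l)) (y l))
        + (\<Sum>j<p. M l j *\<^sub>R blockv blk nu (grad (h j) (y l)))) \<le> B"
    and remainder_lim: "\<And>j. j < p \<Longrightarrow> (\<lambda>l. M l j - (if h j xb = 0 then max 0 (M l j) else 0)) \<longlonglongrightarrow> 0"
  shows "(\<lambda>l. \<Sum>j<p. ((if h j xb = 0 then max 0 (M l j) else 0) / R l) *\<^sub>R blockv blk nu (grad (h j) (y l)))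
         \<longlonglongrightarrow> - (\<Sum>j<m. max 0 (g j xb) *\<^sub>R blockv blk nu (grad (g j) xb))"
proof -
  define G where "G j z = blockv blk nu (grad (h j) z)" for j z
  define V where "V l = blockv blk nu (grad (\<lambda>z. aug_lag th g m z (U l) (R l)) (y l))
      + (\<Sum>j<p. M l j *\<^sub>R G j (y l))" for l
  define \<kappa> where "\<kappa> l j = M l j - (if h j xb = 0 then max 0 (M l j) else 0)" for l j
  define D where "D l = (1 / R l) *\<^sub>R blockv blk nu (grad (\<lambda>z. aug_lag th g m z (U l) (R l)) (y l))
      + (\<Sum>j<p. (\<kappa> l j / R l) *\<^sub>R G j (y l))" for l
  \<comment> \<open>The scaled residual vanishes, while the scaled Lagrangian without the active positive parts converges.\<close>
  have V_lim: "(\<lambda>l. (1 / R l) *\<^sub>R V l) \<longlonglongrightarrow> 0"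
  proof (rule Lim_null_comparison[OF always_eventually])
    show "\<forall>l. norm ((1 / R l) *\<^sub>R V l) \<le> B * (1 / R l)"
      using stationary R_pos by (simp add: V_def G_def divide_right_mono less_imp_le)
    show "(\<lambda>l. B * (1 / R l)) \<longlonglongrightarrow> 0"
      using bounded_divide_tendsto_zero[of "\<lambda>_. B", OF _ R_pos R_lim] by simp
  qed
  have D_lim: "D \<longlonglongrightarrow> (\<Sum>j<m. max 0 (g j xb) *\<^sub>R blockv blk nu (grad (g j) xb))"
    unfolding D_def G_def \<kappa>_def
    by (rule scaled_aug_lag_stationarity_limit[OF C1_th C1_g C1_h y_lim R_pos R_lim U_bdd remainder_lim])
  have diff_eq: "(1 / R l) *\<^sub>R V l - D l
      = (\<Sum>j<p. ((if h j xb = 0 then max 0 (M l j) else 0) / R l) *\<^sub>R G j (y l))" for l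
  proof -
    have "(M l j / R l) *\<^sub>R G j (y l) - (\<kappa> l j / R l) *\<^sub>R G j (y l)
        = ((if h j xb = 0 then max 0 (M l j) else 0) / R l) *\<^sub>R G j (y l)" for j
      by (simp add: \<kappa>_def diff_divide_distrib flip: scaleR_diff_left)
    then show ?thesis
      by (simp add: V_def D_def scaleR_add_right scaleR_sum_right flip: sum_subtractf)
  qed
  have "(\<lambda>l. (1 / R l) *\<^sub>R V l - D l)
      \<longlonglongrightarrow> 0 - (\<Sum>j<m. max 0 (g j xb) *\<^sub>R blockv blk nu (grad (g j) xb))"
    by (rule tendsto_diff[OF V_lim D_lim])
  then show ?thesis by (simp add: diff_eq G_def)
qed

lemma feas_KKT_at_if_penalty_unbounded:
  fixes y :: "nat \<Rightarrow> real ^ 'n" and R :: "nat \<Rightarrow> real" and U M :: "nat \<Rightarrow> nat \<Rightarrow> real"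
  assumes C1_th: "C1 th" and C1_g: "\<And>j. j < m \<Longrightarrow> C1 (g j)" and C1_h: "\<And>j. j < p \<Longrightarrow> C1 (h j)"
    and y_lim: "y \<longlonglongrightarrow> xb"
    and R_pos: "\<And>l. 0 < R l" and R_lim: "filterlim R at_top sequentially"
    and U_bdd: "\<And>j. j < m \<Longrightarrow> bounded (range (\<lambda>l. U l j))"
    and stationary: "\<And>l. norm (blockv blk nu (grad (\<lambda>z. aug_lag th g m z (U l) (R l)) (y l))
        + (\<Sum>j<p. M l j *\<^sub>R blockv blk nu (grad (h j) (y l)))) \<le> B"
    and compl: "\<And>l. L2_set (\<lambda>j. min (- h j (y l)) (M l j)) {..<p} \<le> e l"
    and e_lim: "e \<longlonglongrightarrow> 0"
    and cpld: "CPLD blk nu h p xb"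
  shows "feas_KKT_at blk nu g m h p xb"
proof -
  define G where "G j z = blockv blk nu (grad (h j) z)" for j z
  define A where "A = {j. j < p \<and> h j xb = 0}"
  define c where "c l j = max 0 (M l j) / R l" for l j
  define as where "as = (\<Sum>j<m. max 0 (g j xb) *\<^sub>R blockv blk nu (grad (g j) xb))"
  have "finite A" "A \<subseteq> {..<p}" by (auto simp: A_def)
  have "\<bar>min (- h j (y l)) (M l j)\<bar> \<le> e l" if "j < p" for j l
    using abs_le_L2_set[of "{..<p}" j "\<lambda>j. min (- h j (y l)) (M l j)"] compl[of l] that by simp
  note compl_lim = approx_complementarity_limit[OF y_lim C1_imp_isCont[OF C1_h] this e_lim]
  have "(\<lambda>l. \<Sum>j<p. ((if h j xb = 0 then max 0 (M l j) else 0) / R l) *\<^sub>R G j (y l)) \<longlonglongrightarrow> - as"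
    unfolding G_def as_def
    by (rule scaled_active_multipliers_limit[OF C1_th C1_g C1_h y_lim R_pos R_lim U_bdd stationary compl_lim(2)])
  moreover have "(\<Sum>j<p. ((if h j xb = 0 then max 0 (M l j) else 0) / R l) *\<^sub>R G j (y l))
      = (\<Sum>j\<in>A. c l j *\<^sub>R G j (y l))" for l
    using \<open>A \<subseteq> {..<p}\<close> by (intro sum.mono_neutral_cong_right) (auto simp: A_def c_def)
  ultimately have comb_lim: "(\<lambda>l. \<Sum>j\<in>A. c l j *\<^sub>R G j (y l)) \<longlonglongrightarrow> - as"
    by simp
  have G_cont: "isCont (G j) xb" if "j \<in> A" for j
    using that unfolding A_def G_def[abs_def] by (auto intro: C1_imp_isCont_blockv_grad C1_h)
  have c_nonneg: "0 \<le> c l j" for l j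
    using R_pos[of l] by (simp add: c_def)
  have cpld_A: "eventually (\<lambda>z. lin_dep_fam (\<lambda>j. G j z) J) (nhds xb)"
    if "J \<subseteq> A" "pos_lin_dep (\<lambda>j. G j xb) J" for J
    using cpld that unfolding CPLD_def G_def A_def by blast
  obtain w where w_nonneg: "\<forall>j\<in>A. 0 \<le> w j" and w: "- as = (\<Sum>j\<in>A. w j *\<^sub>R G j xb)"
    using CPLD_conic_comb_limit[OF \<open>finite A\<close> G_cont y_lim c_nonneg comb_lim cpld_A] by blast
  have "as + (\<Sum>j\<in>A. w j *\<^sub>R G j xb) = 0"
    by (simp flip: w)
  then show ?thesis
    using w_nonneg C1_g compl_lim(1) unfolding as_def G_def
    by (intro feas_KKT_at_if_in_active_cone[where A=A and w=w]) (auto simp: A_def C1_imp_differentiable)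
qed

lemma feas_KKT_at_limit_point:
  fixes x :: "nat \<Rightarrow> real ^ 'n" and lam mu u :: "nat \<Rightarrow> nat \<Rightarrow> real" and rho :: "nat \<Rightarrow> real"
  assumes C1_th: "C1 th" and C1_g: "\<And>j. j < m \<Longrightarrow> C1 (g j)" and C1_h: "\<And>j. j < p \<Longrightarrow> C1 (h j)"
    and umax_nonneg: "\<And>j. j < m \<Longrightarrow> umax j \<ge> 0"
    and tau: "0 < \<tau>" "\<tau> < 1" and gamma: "\<gamma> > 1" and rho0: "rho 0 > 0"
    and step_lam: "\<And>k j. j < m \<Longrightarrow> lam (Suc k) j = max 0 (u k j + rho k * g j (x (Suc k)))"
    and step_rho: "\<And>k. rho (Suc k) =
        (if L2_set (\<lambda>j. min (- g j (x (Suc k))) (lam (Suc k) j)) {..<m}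
              \<le> \<tau> * L2_set (\<lambda>j. min (- g j (x k)) (lam k j)) {..<m}
         then rho k else \<gamma> * rho k)"
    and step_u: "\<And>k j. j < m \<Longrightarrow> u (Suc k) j = min (lam (Suc k) j) (umax j)"
    and inexact1: "\<And>k. norm (blockv blk nu (grad (\<lambda>y. aug_lag th g m y (u k) (rho k)) (x (Suc k)))
              + (\<Sum>j<p. mu (Suc k) j *\<^sub>R blockv blk nu (grad (h j) (x (Suc k))))) \<le> B"
    and inexact2: "\<And>k. L2_set (\<lambda>j. min (- h j (x (Suc k))) (mu (Suc k) j)) {..<p} \<le> eps' k"
    and eps'_lim: "eps' \<longlonglongrightarrow> 0"
    and r: "strict_mono r" and x_r: "(x \<circ> r) \<longlonglongrightarrow> xb"
    and cpld: "CPLD blk nu h p xb"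
  shows "feas_KKT_at blk nu g m h p xb"
proof -
  obtain q where q: "strict_mono q" and x_q: "(\<lambda>l. x (Suc (q l))) \<longlonglongrightarrow> xb"
    using r x_r by (rule limit_point_Suc_subseq)
  have eps'_q: "(\<lambda>l. eps' (q l)) \<longlonglongrightarrow> 0"
    using LIMSEQ_subseq_LIMSEQ[OF eps'_lim q] by (simp add: o_def)
  define E where "E k = L2_set (\<lambda>j. min (- g j (x k)) (lam k j)) {..<m}" for k
  show ?thesis
  proof (cases "eventually (\<lambda>k. E (Suc k) \<le> \<tau> * E k) sequentially")
    case True
    then have "E \<longlonglongrightarrow> 0"
      using tau by (intro tendsto_zero_if_eventually_contracting) (auto simp: E_def)
    then have "(\<lambda>l. E (r l)) \<longlonglongrightarrow> 0"
      using LIMSEQ_subseq_LIMSEQ[OF _ r] by (simp add: o_def)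
    then have "g j xb \<le> 0" if "j < m" for j
      by (rule nonpos_at_limit_if_compl_residual_null[where f=g and lam="\<lambda>l. lam (r l)",
            OF x_r C1_imp_isCont[OF C1_g[OF that]] that, rotated]) (simp add: E_def)
    moreover have "h j xb \<le> 0" if "j < p" for j
      using nonpos_at_limit_if_compl_residual_null[where f=h, OF x_q C1_imp_isCont[OF C1_h[OF that]] that
          inexact2 eps'_q] .
    ultimately show ?thesis
      using C1_g by (intro feas_KKT_at_if_feasible C1_imp_differentiable)
  next
    case False
    then have "filterlim rho at_top sequentially"
      using rho0 gamma by (intro penalty_update_tendsto_at_top) (auto simp: step_rho E_def)
    then have "filterlim (\<lambda>l. rho (q l)) at_top sequentially"
      by (rule filterlim_compose[OF _ filterlim_subseq[OF q]])
    moreover have "bounded (range (\<lambda>l. u (q l) j))" if "j < m" for j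
      using bounded_range_safeguarded[of "\<lambda>k. u k j" "\<lambda>k. lam k j" "umax j"]
        step_u step_lam umax_nonneg that by (auto intro: bounded_subset)
    moreover have "0 < rho k" for k
      using rho0 gamma step_rho by (rule penalty_update_pos)
    ultimately show ?thesis
      using inexact1 inexact2
      by (intro feas_KKT_at_if_penalty_unbounded[where U="\<lambda>l. u (q l)" and M="\<lambda>l. mu (Suc (q l))"
            and B=B, OF C1_th C1_g C1_h x_q _ _ _ _ _ eps'_q cpld]) auto
  qed
qed

theorem corollary4p2:
  fixes blk :: "'n::finite \<Rightarrow> 'p::finite"
    and th :: "'p \<Rightarrow> real ^ 'n \<Rightarrow> real"
    and g :: "'p \<Rightarrow> nat \<Rightarrow> real ^ 'n \<Rightarrow> real" and m :: "'p \<Rightarrow> nat"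
    and h :: "'p \<Rightarrow> nat \<Rightarrow> real ^ 'n \<Rightarrow> real" and p :: "'p \<Rightarrow> nat"
    and x :: "nat \<Rightarrow> real ^ 'n"
    and lam :: "nat \<Rightarrow> 'p \<Rightarrow> nat \<Rightarrow> real"
    and mu :: "nat \<Rightarrow> 'p \<Rightarrow> nat \<Rightarrow> real"
    and u :: "nat \<Rightarrow> 'p \<Rightarrow> nat \<Rightarrow> real"
    and rho :: "nat \<Rightarrow> 'p \<Rightarrow> real"
    and umax :: "'p \<Rightarrow> nat \<Rightarrow> real"
    and tau gamma :: "'p \<Rightarrow> real"
    and eps eps' :: "nat \<Rightarrow> real"
    and xbar :: "real ^ 'n"
  assumes C1_th: "\<And>nu. C1 (th nu)"
    and C1_g: "\<And>nu j. j < m nu \<Longrightarrow> C1 (g nu j)"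
    and C1_h: "\<And>nu j. j < p nu \<Longrightarrow> C1 (h nu j)"
    and umax_nonneg: "\<And>nu j. j < m nu \<Longrightarrow> umax nu j \<ge> 0"
    and tau: "\<And>nu. 0 < tau nu \<and> tau nu < 1"
    and gamma: "\<And>nu. gamma nu > 1"
    and rho0: "\<And>nu. rho 0 nu > 0"
    and step_lam: "\<And>k nu j. j < m nu \<Longrightarrow>
        lam (Suc k) nu j = max 0 (u k nu j + rho k nu * g nu j (x (Suc k)))"
    and step_rho: "\<And>k nu. rho (Suc k) nu =
        (if L2_set (\<lambda>j. min (- g nu j (x (Suc k))) (lam (Suc k) nu j)) {..<m nu}
              \<le> tau nu * L2_set (\<lambda>j. min (- g nu j (x k)) (lam k nu j)) {..<m nu}
         then rho k nu else gamma nu * rho k nu)"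
    and step_u: "\<And>k nu j. j < m nu \<Longrightarrow> u (Suc k) nu j = min (lam (Suc k) nu j) (umax nu j)"
    and inexact1: "\<And>k nu.
        norm (blockv blk nu (grad (\<lambda>y. aug_lag (th nu) (g nu) (m nu) y (u k nu) (rho k nu)) (x (Suc k)))
              + (\<Sum>j<p nu. mu (Suc k) nu j *\<^sub>R blockv blk nu (grad (h nu j) (x (Suc k)))))
        \<le> eps k"
    and inexact2: "\<And>k nu.
        L2_set (\<lambda>j. min (- h nu j (x (Suc k))) (mu (Suc k) nu j)) {..<p nu} \<le> eps' k"
    and eps_nonneg: "\<And>k. eps k \<ge> 0"
    and eps_bdd: "bounded (range eps)"
    and eps'_lim: "eps' \<longlonglongrightarrow> 0"
    and limpt: "\<exists>r. strict_mono r \<and> (x \<circ> r) \<longlonglongrightarrow> xbar"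
    and cpld: "\<And>nu. CPLD blk nu (h nu) (p nu) xbar"
  shows "feas_KKT blk g m h p xbar"
proof -
  obtain r where "strict_mono r" "(x \<circ> r) \<longlonglongrightarrow> xbar"
    using limpt by blast
  moreover obtain B where "\<And>k. eps k \<le> B"
    using eps_bdd unfolding bounded_iff by (metis abs_le_D1 rangeI real_norm_def)
  ultimately have "feas_KKT_at blk nu (g nu) (m nu) (h nu) (p nu) xbar" for nu
    using tau[of nu] order_trans[OF inexact1]
    by (intro feas_KKT_at_limit_point[where lam="\<lambda>k. lam k nu" and mu="\<lambda>k. mu k nu"
          and u="\<lambda>k. u k nu" and rho="\<lambda>k. rho k nu" and umax="umax nu" and B=B,
          OF C1_th C1_g C1_h umax_nonneg _ _ gamma rho0 step_lam step_rho step_u _ inexact2 eps'_lim _ _ cpld])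
      auto
  then show ?thesis
    by (simp add: feas_KKT_iff_feas_KKT_at)
qed

end
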